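(* Let $C$ be a normal, closed cone with nonempty interior in a real Banach space. Let $f:\operatorname{int} C\to\operatorname{int} C$ be order-preserving and subhomogeneous, and suppose that $C$ is regular, or $f$ is $\gamma$-condensing, or $f$ is $\tau$-condensing. If $u$ is a fixed point of $f$ and $\operatorname{Fix}(f)$ is bounded in $d_T$, then for any $R>r>0$ with $\operatorname{Fix}(f)\subset B_r(u)$ there is $k\in\mathbb{N}$ such that $f^k(\overline{B_R(u)})\subset B_r(u)$. In particular, if $f$ has a unique fixed point $u\in\operatorname{int}C$, then $f^k(x)\to u$ for all $x\in\operatorname{int} C$.
   Context: A closed cone $C$ (closed convex, $\lambda C\subseteq C$ for $\lambda\ge0$, $C\cap(-C)=\{0\}$) induces the order $x\le y$ iff $y-x\in C$. $C$ is normal if there is $\kappa$ with $\|x\|\le\kappa\|y\|$ whenever $0\le x\le y$; regular if every decreasing sequence in $C$ converges. Thompson's metric on $\operatorname{int}C$: $d_T(x,y)=\log\inf\{\beta\ge1:\beta^{-1}x\le y\le\beta x\}$; $B_R(u)=\{y\in\operatorname{int}C: d_T(u,y)<R\}$, and $\overline{B_R(u)}=[e^{-R}u,e^Ru]=\{z: e^{-R}u\le z\le e^Ru\}$. $f$ is order-preserving if $x\le y\Rightarrow f(x)\le f(y)$; subhomogeneous if $f(tx)\le tf(x)$ for $t\ge1$. $\gamma$ and $\tau$ are Kuratowski's measures of noncompactness for the norm and for $d_T$ respectively ($\inf$ of $d$ such that the set has a finite cover by sets of diameter $\le d$); a continuous map is $\gamma$- (resp. $\tau$-) condensing if it strictly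 decreases $\gamma$ (resp. $\tau$) on every bounded (resp. $d_T$-bounded) set of positive measure. *)

theory Defs
  imports "HOL-Analysis.Analysis"
begin

definition closed_cone :: "'a::real_normed_vector set \<Rightarrow> bool" where
  "closed_cone C \<longleftrightarrow> closed C \<and> convex C \<and>
     (\<forall>x\<in>C. \<forall>c::real. c \<ge> 0 \<longrightarrow> c *\<^sub>R x \<in> C) \<and> C \<inter> uminus ` C = {0}"

definition cone_le :: "'a::real_normed_vector set \<Rightarrow> 'a \<Rightarrow> 'a \<Rightarrow> bool" where
  "cone_le C x y \<longleftrightarrow> y - x \<in> C"

definition normal_cone :: "'a::real_normed_vector set \<Rightarrow> bool" where
  "normal_cone C \<longleftrightarrow> (\<exists>\<kappa>::real. \<forall>x y. cone_le C 0 x \<and> cone_le C x y \<longrightarrow> norm x \<le> \<kappa> * norm y)"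

definition regular_cone :: "'a::real_normed_vector set \<Rightarrow> bool" where
  "regular_cone C \<longleftrightarrow> (\<forall>x::nat \<Rightarrow> 'a. (\<forall>n. x n \<in> C) \<and> (\<forall>n. cone_le C (x (Suc n)) (x n))
        \<longrightarrow> convergent x)"

definition thompson :: "'a::real_normed_vector set \<Rightarrow> 'a \<Rightarrow> 'a \<Rightarrow> real" where
  "thompson C x y = ln (Inf {\<beta>::real. \<beta> \<ge> 1 \<and> cone_le C ((1/\<beta>) *\<^sub>R x) y \<and> cone_le C y (\<beta> *\<^sub>R x)})"

definition thompson_ball :: "'a::real_normed_vector set \<Rightarrow> 'a \<Rightarrow> real \<Rightarrow> 'a set" where
  "thompson_ball C u R = {y \<in> interior C. thompson C u y < R}"

text \<open>The closed Thompson ball, i.e. the order interval [e^{-R}u, e^R u].\<close>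
definition thompson_cball :: "'a::real_normed_vector set \<Rightarrow> 'a \<Rightarrow> real \<Rightarrow> 'a set" where
  "thompson_cball C u R = {z. cone_le C (exp (-R) *\<^sub>R u) z \<and> cone_le C z (exp R *\<^sub>R u)}"

definition thompson_bounded :: "'a::real_normed_vector set \<Rightarrow> 'a set \<Rightarrow> bool" where
  "thompson_bounded C S \<longleftrightarrow> S \<subseteq> interior C \<and> (\<exists>R. \<forall>x\<in>S. \<forall>y\<in>S. thompson C x y \<le> R)"

definition kuratowski :: "('a \<Rightarrow> 'a \<Rightarrow> real) \<Rightarrow> 'a set \<Rightarrow> real" where
  "kuratowski d S = Inf {\<delta>. \<delta> \<ge> 0 \<and> (\<exists>F. finite F \<and> \<Union>F = S \<and>
      (\<forall>A\<in>F. \<forall>x\<in>A. \<forall>y\<in>A. d x y \<le> \<delta>))}"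

definition order_preserving_on :: "'a::real_normed_vector set \<Rightarrow> ('a \<Rightarrow> 'a) \<Rightarrow> bool" where
  "order_preserving_on C f \<longleftrightarrow>
     (\<forall>x\<in>interior C. \<forall>y\<in>interior C. cone_le C x y \<longrightarrow> cone_le C (f x) (f y))"

definition subhomogeneous_on :: "'a::real_normed_vector set \<Rightarrow> ('a \<Rightarrow> 'a) \<Rightarrow> bool" where
  "subhomogeneous_on C f \<longleftrightarrow>
     (\<forall>x\<in>interior C. \<forall>t::real. t \<ge> 1 \<longrightarrow> cone_le C (f (t *\<^sub>R x)) (t *\<^sub>R f x))"

definition gamma_condensing :: "'a::real_normed_vector set \<Rightarrow> ('a \<Rightarrow> 'a) \<Rightarrow> bool" where
  "gamma_condensing C f \<longleftrightarrow> continuous_on (interior C) f \<and>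
     (\<forall>S. S \<subseteq> interior C \<and> bounded S \<and> kuratowski dist S > 0 \<longrightarrow>
        kuratowski dist (f ` S) < kuratowski dist S)"

definition tau_condensing :: "'a::real_normed_vector set \<Rightarrow> ('a \<Rightarrow> 'a) \<Rightarrow> bool" where
  "tau_condensing C f \<longleftrightarrow> continuous_on (interior C) f \<and>
     (\<forall>S. thompson_bounded C S \<and> kuratowski (thompson C) S > 0 \<longrightarrow>
        kuratowski (thompson C) (f ` S) < kuratowski (thompson C) S)"

definition fixpoints :: "'a set \<Rightarrow> ('a \<Rightarrow> 'a) \<Rightarrow> 'a set" where
  "fixpoints D f = {x \<in> D. f x = x}"

end

theory Submission
  imports Defs
begin

text \<open>By subhomogeneity the endpoints \<open>a = e\<^sup>-\<^sup>R u\<close> and \<open>b = e\<^sup>R u\<close> of \<open>[e\<^sup>-\<^sup>R u, e\<^sup>R u]\<close>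
  satisfy \<open>a \<le> f a\<close> and \<open>f b \<le> b\<close>, so their orbits are monotone and squeeze the orbit of
  every point of the interval. A monotone orbit converges: directly if \<open>C\<close> is regular, and
  under either condensing hypothesis because an orbit differs from its image by one point and
  hence has measure of noncompactness zero, which together with normality makes it Cauchy.
  The limit is a fixed point even though \<open>f\<close> need not be continuous, so it lies in the open
  ball \<open>B\<^sub>r(u)\<close>; once both endpoint orbits have entered \<open>B\<^sub>r(u)\<close>, the whole image
  \<open>f\<^sup>k[a, b]\<close> has, because Thompson balls are order convex. For a unique fixed point this works
  for every \<open>r > 0\<close>.\<close>

lemma tendsto_zero_at_right_obtain:
  fixes g :: "real \<Rightarrow> real"
  assumes "(g \<longlongrightarrow> 0) (at_right 0)" "e > 0"
  obtains \<delta> where "\<delta> > 0" "g \<delta> < e"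
proof -
  have "eventually (\<lambda>\<delta>. \<delta> > 0 \<and> g \<delta> < e) (at_right 0)"
    using order_tendstoD(2)[OF assms] eventually_at_right_less eventually_conj by blast
  thus ?thesis using eventually_happens'[OF trivial_limit_at_right_real] that by blast
qed

section \<open>Kuratowski's measure of noncompactness\<close>

definition kuratowski_bounds :: "('a \<Rightarrow> 'a \<Rightarrow> real) \<Rightarrow> 'a set \<Rightarrow> real set" where
  "kuratowski_bounds d S = {\<delta>. \<delta> \<ge> 0 \<and> (\<exists>F. finite F \<and> \<Union>F = S \<and>
      (\<forall>A\<in>F. \<forall>y\<in>A. \<forall>z\<in>A. d y z \<le> \<delta>))}"

lemma kuratowski_eq_Inf: "kuratowski d S = Inf (kuratowski_bounds d S)"
  by (simp add: kuratowski_def kuratowski_bounds_def)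

lemma kuratowski_bounds_nonempty:
  assumes "\<forall>y\<in>S. \<forall>z\<in>S. d y z \<le> B"
  shows "max B 0 \<in> kuratowski_bounds d S"
proof -
  have "\<forall>A\<in>{S}. \<forall>y\<in>A. \<forall>z\<in>A. d y z \<le> max B 0"
    using assms by (simp add: le_max_iff_disj)
  thus ?thesis unfolding kuratowski_bounds_def
    by (intro CollectI conjI exI[of _ "{S}"]) auto
qed

lemma kuratowski_insert_le:
  assumes "d x x \<le> 0" and bdd: "\<forall>y\<in>S. \<forall>z\<in>S. d y z \<le> B"
  shows "kuratowski d (insert x S) \<le> kuratowski d S"
proof -
  have "kuratowski_bounds d S \<subseteq> kuratowski_bounds d (insert x S)"
  proof
    fix \<delta> assume "\<delta> \<in> kuratowski_bounds d S"
    then obtain F where F: "\<delta> \<ge> 0" "finite F" "\<Union>F = S" "\<forall>A\<in>F. \<forall>y\<in>A. \<forall>z\<in>A. d y z \<le> \<delta>"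
      unfolding kuratowski_bounds_def by auto
    have "finite (insert {x} F)" "\<Union>(insert {x} F) = insert x S"
      "\<forall>A\<in>insert {x} F. \<forall>y\<in>A. \<forall>z\<in>A. d y z \<le> \<delta>"
      using F assms(1) by auto
    thus "\<delta> \<in> kuratowski_bounds d (insert x S)"
      using F(1) unfolding kuratowski_bounds_def by (intro CollectI conjI exI[of _ "insert {x} F"])
  qed
  moreover have "bdd_below (kuratowski_bounds d (insert x S))"
    unfolding kuratowski_bounds_def by (rule bdd_belowI[of _ 0]) simp
  ultimately show ?thesis
    using kuratowski_bounds_nonempty[OF bdd] unfolding kuratowski_eq_Inf
    by (intro cInf_superset_mono) auto
qed

lemma small_subfamily_if_kuratowski_zero:
  fixes s :: "nat \<Rightarrow> 'a"
  assumes "kuratowski d (range s) \<le> 0" and bdd: "\<forall>y\<in>range s. \<forall>z\<in>range s. d y z \<le> B"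
    and "\<epsilon> > 0"
  obtains I where "infinite I" "\<forall>j\<in>I. \<forall>l\<in>I. d (s j) (s l) < \<epsilon>"
proof -
  have "Inf (kuratowski_bounds d (range s)) < \<epsilon>"
    using assms(1,3) by (simp add: kuratowski_eq_Inf)
  then obtain \<delta> where \<delta>: "\<delta> \<in> kuratowski_bounds d (range s)" "\<delta> < \<epsilon>"
    using cInf_lessD kuratowski_bounds_nonempty[OF bdd] by blast
  then obtain F where F: "finite F" "\<Union>F = range s" "\<forall>A\<in>F. \<forall>y\<in>A. \<forall>z\<in>A. d y z \<le> \<delta>"
    unfolding kuratowski_bounds_def by auto
  have "UNIV = (\<Union>A\<in>F. {k. s k \<in> A})" using F(2) by auto
  have "\<exists>A\<in>F. infinite {k. s k \<in> A}"
  proof (rule ccontr)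
    assume "\<not> ?thesis"
    hence "finite (\<Union>A\<in>F. {k. s k \<in> A})" using F(1) by blast
    thus False using \<open>UNIV = (\<Union>A\<in>F. {k. s k \<in> A})\<close> infinite_UNIV_nat by simp
  qed
  then obtain A where A: "A \<in> F" "infinite {k. s k \<in> A}" by blast
  have "d (s j) (s l) < \<epsilon>" if "j \<in> {k. s k \<in> A}" "l \<in> {k. s k \<in> A}" for j l
    using F(3) A(1) that \<delta>(2) by force
  with A(2) show ?thesis using that by blast
qed

text \<open>Since \<open>range s = insert (s 0) (f ` range s)\<close>, an orbit has the same measure of
  noncompactness as its image, so a condensing map forces it to vanish.\<close>
lemma kuratowski_orbit_le_zero:
  fixes s :: "nat \<Rightarrow> 'a"
  assumes "d (s 0) (s 0) \<le> 0" and orbit: "\<And>k. s (Suc k) = f (s k)"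
    and bdd: "\<forall>y\<in>range s. \<forall>z\<in>range s. d y z \<le> B"
    and condensing: "kuratowski d (range s) > 0 \<Longrightarrow> kuratowski d (f ` range s) < kuratowski d (range s)"
  shows "kuratowski d (range s) \<le> 0"
proof -
  have image: "f ` range s = range (\<lambda>k. s (Suc k))"
    using orbit by (simp add: image_image)
  have "range s = s ` insert 0 (range Suc)"
    by (simp only: UNIV_nat_eq[symmetric])
  also have "\<dots> = insert (s 0) (range (\<lambda>k. s (Suc k)))"
    by (simp add: image_image)
  finally have "range s = insert (s 0) (range (\<lambda>k. s (Suc k)))" .
  moreover have "\<forall>y\<in>range (\<lambda>k. s (Suc k)). \<forall>z\<in>range (\<lambda>k. s (Suc k)). d y z \<le> B"
    using bdd by blast
  ultimately have "kuratowski d (range s) \<le> kuratowski d (f ` range s)"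
    using kuratowski_insert_le[of d "s 0", OF assms(1)] image by metis
  thus ?thesis using condensing by linarith
qed

section \<open>The cone order and Thompson's metric\<close>

definition thompson_factors :: "'a::real_normed_vector set \<Rightarrow> 'a \<Rightarrow> 'a \<Rightarrow> real set" where
  "thompson_factors C x y = {\<beta>. \<beta> \<ge> 1 \<and> cone_le C ((1/\<beta>) *\<^sub>R x) y \<and> cone_le C y (\<beta> *\<^sub>R x)}"

lemma thompson_eq_ln_Inf: "thompson C x y = ln (Inf (thompson_factors C x y))"
  unfolding thompson_def thompson_factors_def by simp

locale closed_cone_order =
  fixes C :: "'a::real_normed_vector set"
  assumes closed_cone: "closed_cone C"
begin

abbreviation cle :: "'a \<Rightarrow> 'a \<Rightarrow> bool" (infix "\<preceq>" 50) where
  "x \<preceq> y \<equiv> cone_le C x y"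

lemma closed_C: "closed C" and convex_C: "convex C"
  and scaleR_mem: "x \<in> C \<Longrightarrow> c \<ge> 0 \<Longrightarrow> c *\<^sub>R x \<in> C"
  and pointed_C: "C \<inter> uminus ` C = {0}"
  using closed_cone unfolding closed_cone_def by auto

lemma zero_mem: "0 \<in> C"
  using pointed_C by auto

lemma add_mem: assumes "x \<in> C" "y \<in> C" shows "x + y \<in> C"
proof -
  have "(1/2) *\<^sub>R x + (1/2) *\<^sub>R y \<in> C"
    using convexD[OF convex_C assms] by simp
  from scaleR_mem[OF this, of 2] show ?thesis by (simp add: algebra_simps)
qed

lemma cle_refl: "x \<preceq> x"
  by (simp add: cone_le_def zero_mem)

lemma cle_trans: "x \<preceq> y \<Longrightarrow> y \<preceq> z \<Longrightarrow> x \<preceq> z"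
  unfolding cone_le_def using add_mem[of "z - y" "y - x"] by simp

lemma cle_antisym: assumes "x \<preceq> y" "y \<preceq> x" shows "x = y"
proof -
  have "y - x \<in> C \<inter> uminus ` C"
    using assms unfolding cone_le_def by (metis IntI image_eqI minus_diff_eq)
  thus ?thesis using pointed_C by auto
qed

lemma cle_scaleR: "x \<preceq> y \<Longrightarrow> c \<ge> 0 \<Longrightarrow> c *\<^sub>R x \<preceq> c *\<^sub>R y"
  unfolding cone_le_def using scaleR_mem[of "y - x" c] by (simp add: algebra_simps)

lemma cle_scaleR_left: "x \<in> C \<Longrightarrow> a \<le> b \<Longrightarrow> a *\<^sub>R x \<preceq> b *\<^sub>R x"
  unfolding cone_le_def using scaleR_mem[of x "b - a"] by (simp add: algebra_simps)

lemma cle_minus_iff: "- x \<preceq> - y \<longleftrightarrow> y \<preceq> x"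
  by (simp add: cone_le_def)

lemma cle_limit:
  assumes "(s \<longlongrightarrow> a) F" "(t \<longlongrightarrow> b) F" "eventually (\<lambda>k. s k \<preceq> t k) F" "F \<noteq> bot"
  shows "a \<preceq> b"
proof -
  have "((\<lambda>k. t k - s k) \<longlongrightarrow> b - a) F"
    by (intro tendsto_intros assms)
  thus ?thesis
    using Lim_in_closed_set[OF closed_C] assms(3,4) by (simp add: cone_le_def)
qed

lemma cle_if_cle_scaled:
  assumes "\<And>t. t > 1 \<Longrightarrow> x \<preceq> t *\<^sub>R y"
  shows "x \<preceq> y"
proof (rule cle_limit[OF tendsto_const _ _ sequentially_bot])
  have "(\<lambda>n. 1 + 1 / real (Suc n)) \<longlonglongrightarrow> 1 + 0"
    by (intro tendsto_intros LIMSEQ_inverse_real_of_nat[unfolded inverse_eq_divide])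
  thus "(\<lambda>n. (1 + 1 / real (Suc n)) *\<^sub>R y) \<longlonglongrightarrow> y"
    using tendsto_scaleR[OF _ tendsto_const] by fastforce
  show "eventually (\<lambda>n. x \<preceq> (1 + 1 / real (Suc n)) *\<^sub>R y) sequentially"
    using assms by simp
qed

lemma ball_subset_add_mem:
  assumes "ball z e \<subseteq> C" "c > 0" "norm v < c * e"
  shows "c *\<^sub>R z + v \<in> C"
proof -
  have "norm ((1/c) *\<^sub>R v) < e"
    using assms(2,3) by (simp add: field_simps mult.commute)
  hence "z + (1/c) *\<^sub>R v \<in> C"
    using assms(1) by (auto simp: dist_norm)
  from scaleR_mem[OF this, of c] show ?thesis
    using assms(2) by (simp add: algebra_simps)
qed

lemma interior_cle: assumes "x \<in> interior C" "x \<preceq> y" shows "y \<in> interior C"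
proof -
  obtain e where e: "e > 0" "ball x e \<subseteq> C"
    using assms(1) mem_interior by blast
  have "ball y e \<subseteq> C"
  proof
    fix w assume "w \<in> ball y e"
    hence "norm (w - y) < 1 * e" by (simp add: dist_norm norm_minus_commute)
    from ball_subset_add_mem[OF e(2) _ this] have "x + (w - y) \<in> C" by simp
    from add_mem[OF this, of "y - x"] assms(2) show "w \<in> C"
      by (simp add: cone_le_def)
  qed
  thus ?thesis using e(1) mem_interior by blast
qed

lemma scaleR_interior: assumes "x \<in> interior C" "c > 0" shows "c *\<^sub>R x \<in> interior C"
proof -
  obtain e where e: "e > 0" "ball x e \<subseteq> C"
    using assms(1) mem_interior by blast
  have "ball (c *\<^sub>R x) (c * e) \<subseteq> C"
  proof
    fix w assume "w \<in> ball (c *\<^sub>R x) (c * e)"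
    hence "norm (w - c *\<^sub>R x) < c * e" by (simp add: dist_norm norm_minus_commute)
    from ball_subset_add_mem[OF e(2) assms(2) this] show "w \<in> C" by simp
  qed
  thus ?thesis using e(1) assms(2) mem_interior by (metis mult_pos_pos)
qed

lemma interior_dominates:
  assumes "p \<in> interior C"
  obtains \<beta> where "\<beta> \<ge> 1" "q \<preceq> \<beta> *\<^sub>R p"
proof -
  obtain e where e: "e > 0" "ball p e \<subseteq> C"
    using assms mem_interior by blast
  define \<beta> where "\<beta> = norm q / e + 1"
  have \<beta>: "\<beta> \<ge> 1" "norm (- q) < \<beta> * e"
    using e(1) by (auto simp: \<beta>_def field_simps)
  from ball_subset_add_mem[OF e(2) _ \<beta>(2)] \<beta>(1) have "q \<preceq> \<beta> *\<^sub>R p"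
    by (simp add: cone_le_def)
  with \<beta>(1) show ?thesis using that by blast
qed

lemma eventually_cle_nhds:
  assumes "z \<in> interior C" "t > 1"
  shows "eventually (\<lambda>w. (1/t) *\<^sub>R z \<preceq> w \<and> w \<preceq> t *\<^sub>R z) (nhds z)"
proof -
  obtain e where e: "e > 0" "ball z e \<subseteq> C"
    using assms(1) mem_interior by blast
  have "0 \<le> (t - 1)\<^sup>2" by simp
  hence c: "1 - 1/t > 0" "1 - 1/t \<le> t - 1"
    using assms(2) by (auto simp: field_simps power2_eq_square)
  have "(1/t) *\<^sub>R z \<preceq> w \<and> w \<preceq> t *\<^sub>R z" if w: "w \<in> ball z ((1 - 1/t) * e)" for w
  proof
    have n: "norm (w - z) < (1 - 1/t) * e"
      using w by (simp add: dist_norm norm_minus_commute)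
    from ball_subset_add_mem[OF e(2) c(1) n] show "(1/t) *\<^sub>R z \<preceq> w"
      by (simp add: cone_le_def algebra_simps)
    have "(1 - 1/t) * e \<le> (t - 1) * e"
      using c(2) e(1) by (intro mult_right_mono) auto
    hence "norm (z - w) < (t - 1) * e"
      using n by (simp add: norm_minus_commute)
    from ball_subset_add_mem[OF e(2) _ this] assms(2) show "w \<preceq> t *\<^sub>R z"
      by (simp add: cone_le_def algebra_simps)
  qed
  moreover have "eventually (\<lambda>w. w \<in> ball z ((1 - 1/t) * e)) (nhds z)"
    using c(1) e(1) by (intro eventually_nhds_ball) simp
  ultimately show ?thesis
    by (auto elim: eventually_mono)
qed

lemma thompson_factors_nonempty:
  assumes "p \<in> interior C" "q \<in> interior C"
  shows "thompson_factors C p q \<noteq> {}"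
proof -
  obtain b1 where b1: "b1 \<ge> 1" "q \<preceq> b1 *\<^sub>R p" using interior_dominates[OF assms(1)] .
  obtain b2 where b2: "b2 \<ge> 1" "p \<preceq> b2 *\<^sub>R q" using interior_dominates[OF assms(2)] .
  define b where "b = max b1 b2"
  have b: "b \<ge> 1" "b1 \<le> b" "b2 \<le> b" using b1(1) by (auto simp: b_def)
  have pq: "p \<in> C" "q \<in> C" using assms interior_subset by blast+
  have upper: "q \<preceq> b *\<^sub>R p"
    using b1(2) cle_scaleR_left[OF pq(1) b(2)] cle_trans by blast
  have "p \<preceq> b *\<^sub>R q"
    using b2(2) cle_scaleR_left[OF pq(2) b(3)] cle_trans by blast
  hence "(1/b) *\<^sub>R p \<preceq> (1/b) *\<^sub>R (b *\<^sub>R q)"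
    using b(1) by (intro cle_scaleR) auto
  hence "(1/b) *\<^sub>R p \<preceq> q" using b(1) by simp
  hence "b \<in> thompson_factors C p q"
    using b(1) upper by (simp add: thompson_factors_def)
  thus ?thesis by blast
qed

lemma thompson_factors_bounds:
  assumes "\<beta> \<in> thompson_factors C p q"
  shows "1 \<le> Inf (thompson_factors C p q)" "Inf (thompson_factors C p q) \<le> \<beta>"
proof -
  have "bdd_below (thompson_factors C p q)"
    by (rule bdd_belowI[of _ 1]) (simp add: thompson_factors_def)
  thus "Inf (thompson_factors C p q) \<le> \<beta>" using assms by (rule cInf_lower[rotated])
  show "1 \<le> Inf (thompson_factors C p q)"
    using assms by (intro cInf_greatest) (auto simp: thompson_factors_def)
qed

lemma thompson_le_ln: "\<beta> \<in> thompson_factors C p q \<Longrightarrow> thompson C p q \<le> ln \<beta>"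
  using thompson_factors_bounds[of \<beta> p q] by (simp add: thompson_eq_ln_Inf)

lemma thompson_less_iff:
  assumes "p \<in> interior C" "q \<in> interior C"
  shows "thompson C p q < r \<longleftrightarrow> (\<exists>\<beta>\<in>thompson_factors C p q. \<beta> < exp r)"
proof
  let ?I = "Inf (thompson_factors C p q)"
  have ne: "thompson_factors C p q \<noteq> {}" using thompson_factors_nonempty[OF assms] .
  hence I1: "1 \<le> ?I" using thompson_factors_bounds by blast
  assume "thompson C p q < r"
  hence "exp (ln ?I) < exp r"
    by (simp add: thompson_eq_ln_Inf)
  hence "?I < exp r"
    using I1 by simp
  thus "\<exists>\<beta>\<in>thompson_factors C p q. \<beta> < exp r" using cInf_lessD[OF ne] by blast
next
  assume "\<exists>\<beta>\<in>thompson_factors C p q. \<beta> < exp r"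
  then obtain \<beta> where \<beta>: "\<beta> \<in> thompson_factors C p q" "\<beta> < exp r" by blast
  hence "0 < \<beta>" by (simp add: thompson_factors_def)
  hence "ln \<beta> < r" using \<beta>(2) by (simp add: ln_less_cancel_iff[symmetric, of \<beta> "exp r"])
  thus "thompson C p q < r" using thompson_le_ln[OF \<beta>(1)] by linarith
qed

lemma thompson_self: assumes "p \<in> C" shows "thompson C p p = 0"
proof -
  have "thompson_factors C p p = {1..}"
  proof (intro set_eqI iffI)
    fix \<beta> :: real assume "\<beta> \<in> {1..}"
    hence "1/\<beta> \<le> 1" "1 \<le> \<beta>" by auto
    from this cle_scaleR_left[OF assms] have "(1/\<beta>) *\<^sub>R p \<preceq> 1 *\<^sub>R p" "1 *\<^sub>R p \<preceq> \<beta> *\<^sub>R p"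
      by blast+
    thus "\<beta> \<in> thompson_factors C p p" using \<open>1 \<le> \<beta>\<close> by (simp add: thompson_factors_def)
  qed (simp add: thompson_factors_def)
  thus ?thesis by (simp add: thompson_eq_ln_Inf cInf_atLeast)
qed

lemma thompson_factors_upclosed:
  assumes "\<beta> \<in> thompson_factors C p q" "\<beta> \<le> \<beta>'" "p \<in> C"
  shows "\<beta>' \<in> thompson_factors C p q"
proof -
  have \<beta>: "1 \<le> \<beta>" "(1/\<beta>) *\<^sub>R p \<preceq> q" "q \<preceq> \<beta> *\<^sub>R p"
    using assms(1) by (auto simp: thompson_factors_def)
  have "1/\<beta>' \<le> 1/\<beta>"
    using \<beta>(1) assms(2) by (simp add: frac_le)
  hence "(1/\<beta>') *\<^sub>R p \<preceq> q"
    using cle_scaleR_left[OF assms(3)] \<beta>(2) cle_trans by blast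
  moreover have "q \<preceq> \<beta>' *\<^sub>R p"
    using cle_scaleR_left[OF assms(3) assms(2)] \<beta>(3) cle_trans by blast
  ultimately show ?thesis
    using \<beta>(1) assms(2) by (simp add: thompson_factors_def)
qed

lemma thompson_ball_order_convex:
  assumes u: "u \<in> interior C" and xy: "x \<in> thompson_ball C u r" "y \<in> thompson_ball C u r"
    and "x \<preceq> w" "w \<preceq> y"
  shows "w \<in> thompson_ball C u r"
proof -
  have int: "x \<in> interior C" "y \<in> interior C" "w \<in> interior C"
    using xy interior_cle \<open>x \<preceq> w\<close> by (auto simp: thompson_ball_def)
  obtain \<beta>1 \<beta>2 where \<beta>: "\<beta>1 \<in> thompson_factors C u x" "\<beta>1 < exp r"
    "\<beta>2 \<in> thompson_factors C u y" "\<beta>2 < exp r"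
    using xy thompson_less_iff[OF u] int by (auto simp: thompson_ball_def)
  have "max \<beta>1 \<beta>2 \<in> thompson_factors C u x" "max \<beta>1 \<beta>2 \<in> thompson_factors C u y"
    using thompson_factors_upclosed \<beta>(1,3) u interior_subset by (meson max.cobounded1 max.cobounded2 subsetD)+
  hence "max \<beta>1 \<beta>2 \<in> thompson_factors C u w"
    using assms(4,5) cle_trans unfolding thompson_factors_def by blast
  moreover have "max \<beta>1 \<beta>2 < exp r" using \<beta>(2,4) by simp
  ultimately have "thompson C u w < r"
    using thompson_less_iff[OF u int(3)] by blast
  thus ?thesis using int(3) by (simp add: thompson_ball_def)
qed

lemma eventually_nhds_in_thompson_ball:
  assumes u: "u \<in> interior C" and x: "x \<in> thompson_ball C u r"
  shows "eventually (\<lambda>w. w \<in> thompson_ball C u r) (nhds x)"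
proof -
  have xi: "x \<in> interior C" using x by (simp add: thompson_ball_def)
  obtain \<beta> where \<beta>: "\<beta> \<in> thompson_factors C u x" "\<beta> < exp r"
    using x thompson_less_iff[OF u xi] by (auto simp: thompson_ball_def)
  have \<beta>1: "\<beta> \<ge> 1" using \<beta>(1) by (simp add: thompson_factors_def)
  define t where "t = (exp r / \<beta> + 1) / 2"
  have t: "t > 1" "t * \<beta> < exp r"
    using \<beta>(2) \<beta>1 by (auto simp: t_def field_simps)
  show ?thesis
    using eventually_cle_nhds[OF xi t(1)]
  proof (rule eventually_mono)
    fix w assume w: "(1/t) *\<^sub>R x \<preceq> w \<and> w \<preceq> t *\<^sub>R x"
    have wi: "w \<in> interior C"
      using w interior_cle scaleR_interior[OF xi, of "1/t"] t(1) by auto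
    have "(1/t) *\<^sub>R ((1/\<beta>) *\<^sub>R u) \<preceq> (1/t) *\<^sub>R x" "t *\<^sub>R x \<preceq> t *\<^sub>R (\<beta> *\<^sub>R u)"
      using \<beta>(1) t(1) by (auto intro!: cle_scaleR simp: thompson_factors_def simp del: scaleR_scaleR)
    moreover have "1 * 1 \<le> t * \<beta>" using t(1) \<beta>1 by (intro mult_mono) auto
    ultimately have "t * \<beta> \<in> thompson_factors C u w"
      using w cle_trans unfolding thompson_factors_def by (auto simp: mult.commute)
    thus "w \<in> thompson_ball C u r"
      using t(2) thompson_less_iff[OF u wi] wi by (auto simp: thompson_ball_def)
  qed
qed

lemma closed_thompson_cball: "closed (thompson_cball C u R)"
proof -
  have "thompson_cball C u R =
      (\<lambda>z. z - exp (-R) *\<^sub>R u) -` C \<inter> (\<lambda>z. exp R *\<^sub>R u - z) -` C"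
    by (auto simp: thompson_cball_def cone_le_def)
  thus ?thesis
    by (auto intro!: closed_Int continuous_closed_vimage closed_C continuous_intros)
qed

lemma thompson_cball_subset_interior:
  "u \<in> interior C \<Longrightarrow> thompson_cball C u R \<subseteq> interior C"
  using interior_cle scaleR_interior[of u "exp (-R)"] by (auto simp: thompson_cball_def)

lemma thompson_le_on_cball:
  assumes "R \<ge> 0" "p \<in> thompson_cball C u R" "q \<in> thompson_cball C u R"
  shows "thompson C p q \<le> 2 * R"
proof -
  have p: "exp (-R) *\<^sub>R u \<preceq> p" "p \<preceq> exp R *\<^sub>R u"
    and q: "exp (-R) *\<^sub>R u \<preceq> q" "q \<preceq> exp R *\<^sub>R u"
    using assms(2,3) by (auto simp: thompson_cball_def)
  have "exp (-(2*R)) *\<^sub>R p \<preceq> exp (-(2*R)) *\<^sub>R (exp R *\<^sub>R u)"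
    using p(2) by (rule cle_scaleR) simp
  moreover have "exp (-(2*R)) *\<^sub>R (exp R *\<^sub>R u) = exp (-R) *\<^sub>R u"
    by (simp add: mult_exp_exp)
  ultimately have "exp (-(2*R)) *\<^sub>R p \<preceq> q"
    using q(1) cle_trans by metis
  hence "(1 / exp (2*R)) *\<^sub>R p \<preceq> q"
    by (simp add: exp_minus divide_inverse)
  moreover have "exp (2*R) *\<^sub>R (exp (-R) *\<^sub>R u) \<preceq> exp (2*R) *\<^sub>R p"
    using p(1) by (rule cle_scaleR) simp
  hence "q \<preceq> exp (2*R) *\<^sub>R p"
    using q(2) cle_trans by (simp add: mult_exp_exp)
  ultimately have "exp (2*R) \<in> thompson_factors C p q"
    using assms(1) by (simp add: thompson_factors_def)
  from thompson_le_ln[OF this] show ?thesis by simp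
qed

lemma mem_thompson_cball_if_large:
  assumes "u \<in> interior C" "x \<in> interior C"
  obtains R0 where "\<And>R. R \<ge> R0 \<Longrightarrow> x \<in> thompson_cball C u R"
proof -
  obtain b1 where b1: "b1 \<ge> 1" "x \<preceq> b1 *\<^sub>R u" using interior_dominates[OF assms(1)] .
  obtain b2 where b2: "b2 \<ge> 1" "u \<preceq> b2 *\<^sub>R x" using interior_dominates[OF assms(2)] .
  have uC: "u \<in> C" using assms(1) interior_subset by blast
  have "x \<in> thompson_cball C u R" if R: "R \<ge> ln (max b1 b2)" for R
  proof -
    have bR: "b1 \<le> exp R" "b2 \<le> exp R"
      using R b1(1) exp_ln[of "max b1 b2"] by (smt (verit) exp_le_cancel_iff)+
    have "(1/b2) *\<^sub>R u \<preceq> (1/b2) *\<^sub>R (b2 *\<^sub>R x)"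
      using b2 by (intro cle_scaleR) auto
    moreover have "exp (-R) *\<^sub>R u \<preceq> (1/b2) *\<^sub>R u"
      using bR(2) b2(1) by (intro cle_scaleR_left[OF uC]) (simp add: exp_minus field_simps)
    ultimately have "exp (-R) *\<^sub>R u \<preceq> x"
      using b2(1) cle_trans by simp
    moreover have "x \<preceq> exp R *\<^sub>R u"
      using b1(2) cle_scaleR_left[OF uC bR(1)] cle_trans by blast
    ultimately show ?thesis by (simp add: thompson_cball_def)
  qed
  thus ?thesis using that by blast
qed

lemma monotone_cle_SucI:
  assumes "\<And>k. s k \<preceq> s (Suc k)"
  shows "monotone (\<le>) (\<preceq>) s"
proof (rule monotoneI)
  fix j l :: nat assume "j \<le> l"
  thus "s j \<preceq> s l"
    by (induction rule: dec_induct) (auto intro: cle_refl cle_trans assms)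
qed

lemma regular_cone_convergent:
  assumes "regular_cone C" and bounds: "\<And>k. a \<preceq> s k" "\<And>k. s k \<preceq> b"
    and mono: "monotone (\<le>) (\<preceq>) s \<or> monotone (\<ge>) (\<preceq>) s"
  shows "convergent s"
  using mono
proof
  assume "monotone (\<le>) (\<preceq>) s"
  hence "convergent (\<lambda>k. b - s k)"
    using assms(1) bounds(2) unfolding regular_cone_def
    by (auto simp: monotone_def cone_le_def)
  from convergent_diff[OF convergent_const[of b] this] show ?thesis by simp
next
  assume "monotone (\<ge>) (\<preceq>) s"
  hence "convergent (\<lambda>k. s k - a)"
    using assms(1) bounds(1) unfolding regular_cone_def
    by (auto simp: monotone_def cone_le_def)
  from convergent_add[OF this convergent_const[of a]] show ?thesis by simp
qed

end

section \<open>Order-preserving subhomogeneous maps\<close>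

locale order_preserving_subhomogeneous = closed_cone_order C for C :: "'a::real_normed_vector set" +
  fixes f :: "'a \<Rightarrow> 'a"
  assumes maps: "f ` interior C \<subseteq> interior C"
    and order_preserving: "order_preserving_on C f"
    and subhomogeneous: "subhomogeneous_on C f"
begin

lemma funpow_interior: "x \<in> interior C \<Longrightarrow> (f ^^ k) x \<in> interior C"
  using maps by (induction k) auto

lemma f_mono: "x \<in> interior C \<Longrightarrow> y \<in> interior C \<Longrightarrow> x \<preceq> y \<Longrightarrow> f x \<preceq> f y"
  using order_preserving unfolding order_preserving_on_def by blast

lemma f_scaleR_cle: "x \<in> interior C \<Longrightarrow> t \<ge> 1 \<Longrightarrow> f (t *\<^sub>R x) \<preceq> t *\<^sub>R f x"
  using subhomogeneous unfolding subhomogeneous_on_def by blast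

lemma funpow_mono:
  "x \<in> interior C \<Longrightarrow> y \<in> interior C \<Longrightarrow> x \<preceq> y \<Longrightarrow> (f ^^ k) x \<preceq> (f ^^ k) y"
  by (induction k) (auto intro: f_mono funpow_interior)

lemma orbit_monotone:
  assumes "x \<in> interior C" "x \<preceq> f x"
  shows "monotone (\<le>) (\<preceq>) (\<lambda>k. (f ^^ k) x)"
  using funpow_mono[OF assms(1) _ assms(2)] maps assms(1)
  by (intro monotone_cle_SucI) (auto simp: funpow_swap1)

lemma orbit_antitone:
  assumes "x \<in> interior C" "f x \<preceq> x"
  shows "monotone (\<ge>) (\<preceq>) (\<lambda>k. (f ^^ k) x)"
proof -
  have "monotone (\<le>) (\<preceq>) (\<lambda>k. - (f ^^ k) x)"
    using funpow_mono[OF _ assms(1) assms(2)] maps assms(1)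
    by (intro monotone_cle_SucI) (auto simp: funpow_swap1 cle_minus_iff)
  thus ?thesis by (auto simp: monotone_def cle_minus_iff)
qed

text \<open>No continuity of \<open>f\<close> is needed: order preservation and subhomogeneity squeeze
  \<open>f z\<close> between \<open>z/t\<close> and \<open>t z\<close> for every \<open>t > 1\<close>.\<close>
lemma orbit_limit_fixed:
  assumes x: "x \<in> interior C" and lim: "(\<lambda>k. (f ^^ k) x) \<longlonglongrightarrow> z" and z: "z \<in> interior C"
  shows "f z = z"
proof (rule cle_antisym)
  let ?s = "\<lambda>k. (f ^^ k) x"
  have lim_Suc: "(\<lambda>k. f (?s k)) \<longlonglongrightarrow> z"
    using LIMSEQ_Suc[OF lim] by simp
  have near: "eventually (\<lambda>k. (1/t) *\<^sub>R z \<preceq> ?s k \<and> ?s k \<preceq> t *\<^sub>R z) sequentially"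
    if "t > 1" for t
    using lim eventually_cle_nhds[OF z that] by (auto simp: filterlim_iff)
  have s_int: "?s k \<in> interior C" for k using funpow_interior[OF x] .
  show "z \<preceq> f z"
  proof (rule cle_if_cle_scaled)
    fix t :: real assume t: "t > 1"
    have tz: "t *\<^sub>R z \<in> interior C" using scaleR_interior[OF z] t by simp
    have "eventually (\<lambda>k. f (?s k) \<preceq> t *\<^sub>R f z) sequentially"
      using near[OF t]
    proof eventually_elim
      case (elim k)
      hence "f (?s k) \<preceq> f (t *\<^sub>R z)" using f_mono[OF s_int tz] by blast
      thus ?case using f_scaleR_cle[OF z, of t] t cle_trans by simp
    qed
    thus "z \<preceq> t *\<^sub>R f z" by (rule cle_limit[OF lim_Suc tendsto_const _ sequentially_bot])
  qed
  show "f z \<preceq> z"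
  proof (rule cle_if_cle_scaled)
    fix t :: real assume t: "t > 1"
    have "eventually (\<lambda>k. f z \<preceq> t *\<^sub>R f (?s k)) sequentially"
      using near[OF t]
    proof eventually_elim
      case (elim k)
      hence "t *\<^sub>R ((1/t) *\<^sub>R z) \<preceq> t *\<^sub>R ?s k" using t by (intro cle_scaleR) auto
      hence "z \<preceq> t *\<^sub>R ?s k" using t by simp
      hence "f z \<preceq> f (t *\<^sub>R ?s k)"
        using f_mono[OF z scaleR_interior[OF s_int]] t by simp
      thus ?case using f_scaleR_cle[OF s_int] t cle_trans by (meson less_imp_le)
    qed
    moreover have "(\<lambda>k. t *\<^sub>R f (?s k)) \<longlonglongrightarrow> t *\<^sub>R z"
      by (intro tendsto_intros lim_Suc)
    ultimately show "f z \<preceq> t *\<^sub>R z" by (rule cle_limit[OF tendsto_const _ _ sequentially_bot, rotated])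
  qed
qed

end

section \<open>Normal cones\<close>

locale normal_cone_order = closed_cone_order C for C :: "'a::banach set" +
  fixes \<kappa> :: real
  assumes normal: "0 \<preceq> x \<Longrightarrow> x \<preceq> y \<Longrightarrow> norm x \<le> \<kappa> * norm y"
    and kappa_nonneg: "\<kappa> \<ge> 0"
begin

lemma bounded_thompson_cball: "bounded (thompson_cball C u R)"
proof -
  let ?a = "exp (-R) *\<^sub>R u" and ?b = "exp R *\<^sub>R u"
  have "norm z \<le> \<kappa> * norm (?b - ?a) + norm ?a" if "z \<in> thompson_cball C u R" for z
  proof -
    have "0 \<preceq> z - ?a" "z - ?a \<preceq> ?b - ?a"
      using that by (auto simp: thompson_cball_def cone_le_def)
    hence "norm (z - ?a) \<le> \<kappa> * norm (?b - ?a)" by (rule normal)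
    thus ?thesis using norm_triangle_sub[of z ?a] by linarith
  qed
  thus ?thesis unfolding bounded_iff by blast
qed

lemma norm_diff_le_thompson:
  assumes pq: "p \<in> interior C" "q \<in> interior C" "p \<preceq> q \<or> q \<preceq> p"
    and b: "p \<preceq> b" and \<delta>: "thompson C p q < \<delta>"
  shows "norm (q - p) \<le> \<kappa> * (exp \<delta> - 1) * norm b"
proof -
  obtain \<beta> where \<beta>: "1 \<le> \<beta>" "\<beta> < exp \<delta>" "(1/\<beta>) *\<^sub>R p \<preceq> q" "q \<preceq> \<beta> *\<^sub>R p"
    using \<delta> thompson_less_iff[OF pq(1,2)] by (auto simp: thompson_factors_def)
  have pC: "p \<in> C" using pq(1) interior_subset by blast
  have \<beta>b: "(\<beta> - 1) *\<^sub>R p \<preceq> (\<beta> - 1) *\<^sub>R b"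
    using b \<beta>(1) by (intro cle_scaleR) auto
  obtain w where w: "norm w = norm (q - p)" "0 \<preceq> w" "w \<preceq> (\<beta> - 1) *\<^sub>R p"
    using pq(3)
  proof
    assume "p \<preceq> q"
    moreover have "q - p \<preceq> (\<beta> - 1) *\<^sub>R p"
      using \<beta>(4) by (simp add: cone_le_def algebra_simps)
    ultimately show thesis using that[of "q - p"] by (simp add: cone_le_def)
  next
    assume "q \<preceq> p"
    have "0 \<le> (\<beta> - 1)\<^sup>2" by simp
    hence "1 - 1/\<beta> \<le> \<beta> - 1" using \<beta>(1) by (simp add: field_simps power2_eq_square)
    hence "(1 - 1/\<beta>) *\<^sub>R p \<preceq> (\<beta> - 1) *\<^sub>R p" by (rule cle_scaleR_left[OF pC])
    moreover have "p - q \<preceq> (1 - 1/\<beta>) *\<^sub>R p"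
      using \<beta>(3) by (simp add: cone_le_def algebra_simps)
    ultimately have "p - q \<preceq> (\<beta> - 1) *\<^sub>R p" using cle_trans by blast
    with \<open>q \<preceq> p\<close> show thesis using that[of "p - q"] by (simp add: cone_le_def norm_minus_commute)
  qed
  have "norm (q - p) \<le> \<kappa> * norm ((\<beta> - 1) *\<^sub>R b)"
    using normal[OF w(2) cle_trans[OF w(3) \<beta>b]] w(1) by simp
  also have "\<dots> = \<kappa> * (\<beta> - 1) * norm b" using \<beta>(1) by simp
  also have "\<dots> \<le> \<kappa> * (exp \<delta> - 1) * norm b"
    using \<beta>(2) kappa_nonneg by (intro mult_right_mono mult_left_mono) auto
  finally show ?thesis .
qed

lemma norm_diff_le_thompson_ball:
  assumes u: "u \<in> interior C" and y: "y \<in> thompson_ball C u r"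
  shows "norm (y - u) \<le> (\<kappa> + 1) * (exp r - exp (-r)) * norm u"
proof -
  have yi: "y \<in> interior C" using y by (simp add: thompson_ball_def)
  obtain \<beta> where \<beta>: "1 \<le> \<beta>" "\<beta> < exp r" "(1/\<beta>) *\<^sub>R u \<preceq> y" "y \<preceq> \<beta> *\<^sub>R u"
    using y thompson_less_iff[OF u yi] by (auto simp: thompson_ball_def thompson_factors_def)
  define a where "a = y - (1/\<beta>) *\<^sub>R u"
  have "0 \<preceq> a" "a \<preceq> (\<beta> - 1/\<beta>) *\<^sub>R u"
    using \<beta>(3,4) by (simp_all add: a_def cone_le_def algebra_simps)
  hence "norm a \<le> \<kappa> * norm ((\<beta> - 1/\<beta>) *\<^sub>R u)" by (rule normal)
  moreover have "1/\<beta> \<le> \<beta>" using \<beta>(1) by (smt (verit) divide_le_eq_1)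
  ultimately have na: "norm a \<le> \<kappa> * ((\<beta> - 1/\<beta>) * norm u)" by simp
  have "1 / exp r \<le> 1 / \<beta>"
    using \<beta>(1,2) by (intro frac_le) auto
  hence \<beta>r: "\<beta> - 1/\<beta> \<le> exp r - exp (-r)"
    using \<beta>(2) by (simp add: exp_minus inverse_eq_divide)
  have "norm (y - u) \<le> norm a + norm ((1 - 1/\<beta>) *\<^sub>R u)"
    using norm_triangle_ineq4[of a "(1 - 1/\<beta>) *\<^sub>R u"] by (simp add: a_def algebra_simps)
  also have "\<dots> \<le> \<kappa> * ((\<beta> - 1/\<beta>) * norm u) + (\<beta> - 1/\<beta>) * norm u"
  proof -
    have "1 - 1/\<beta> \<le> \<beta> - 1/\<beta>" using \<beta>(1) by simp
    hence "(1 - 1/\<beta>) * norm u \<le> (\<beta> - 1/\<beta>) * norm u" by (rule mult_right_mono) simp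
    thus ?thesis using na \<beta>(1) by simp
  qed
  also have "\<dots> = (\<kappa> + 1) * (\<beta> - 1/\<beta>) * norm u" by (simp add: algebra_simps add_divide_distrib)
  also have "\<dots> \<le> (\<kappa> + 1) * (exp r - exp (-r)) * norm u"
    using \<beta>r kappa_nonneg by (intro mult_right_mono mult_left_mono) auto
  finally show ?thesis .
qed

lemma tendsto_if_eventually_in_thompson_ball:
  assumes u: "u \<in> interior C"
    and ev: "\<And>r. r > 0 \<Longrightarrow> eventually (\<lambda>k. s k \<in> thompson_ball C u r) F"
  shows "(s \<longlongrightarrow> u) F"
proof (rule tendstoI)
  fix e :: real assume e: "e > 0"
  have "((\<lambda>r. (\<kappa> + 1) * (exp r - exp (-r)) * norm u) \<longlongrightarrow> (\<kappa> + 1) * (exp 0 - exp (-0)) * norm u)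
      (at_right 0)"
    by (intro tendsto_intros)
  then obtain r where r: "r > 0" "(\<kappa> + 1) * (exp r - exp (-r)) * norm u < e"
    using tendsto_zero_at_right_obtain[OF _ e] by auto
  show "eventually (\<lambda>k. dist (s k) u < e) F"
    using ev[OF r(1)] by eventually_elim
      (use norm_diff_le_thompson_ball[OF u] r(2) in \<open>fastforce simp: dist_norm\<close>)
qed

lemma monotone_convergent_if_small_subfamilies:
  assumes mono: "monotone (\<le>) (\<preceq>) s"
    and small: "\<And>\<epsilon>. \<epsilon> > 0 \<Longrightarrow> \<exists>I. infinite I \<and> (\<forall>j\<in>I. \<forall>l\<in>I. norm (s l - s j) < \<epsilon>)"
  shows "convergent s"
proof (rule Cauchy_convergent, rule CauchyI)
  fix e :: real assume e: "e > 0"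
  define \<epsilon> where "\<epsilon> = e / (2 * (\<kappa> + 1))"
  have \<epsilon>: "\<epsilon> > 0" "2 * (\<kappa> * \<epsilon>) < e"
    using e kappa_nonneg by (auto simp: \<epsilon>_def field_simps)
  obtain I where I: "infinite I" "\<forall>j\<in>I. \<forall>l\<in>I. norm (s l - s j) < \<epsilon>"
    using small[OF \<epsilon>(1)] by blast
  obtain j0 where j0: "j0 \<in> I" using infinite_imp_nonempty[OF I(1)] by blast
  have near: "norm (s m - s j0) \<le> \<kappa> * \<epsilon>" if m: "m \<ge> j0" for m
  proof -
    obtain l where l: "l \<ge> m" "l \<in> I" using I(1) infinite_nat_iff_unbounded_le by blast
    have "0 \<preceq> s m - s j0" "s m - s j0 \<preceq> s l - s j0"
      using monotoneD[OF mono m] monotoneD[OF mono l(1)] by (simp_all add: cone_le_def)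
    hence "norm (s m - s j0) \<le> \<kappa> * norm (s l - s j0)" by (rule normal)
    also have "\<dots> \<le> \<kappa> * \<epsilon>"
      using I(2) j0 l(2) kappa_nonneg by (intro mult_left_mono) (auto intro: less_imp_le)
    finally show ?thesis .
  qed
  have "norm (s m - s n) < e" if "m \<ge> j0" "n \<ge> j0" for m n
  proof -
    have "norm (s m - s n) \<le> norm (s m - s j0) + norm (s n - s j0)"
      using norm_triangle_ineq4[of "s m - s j0" "s n - s j0"] by simp
    thus ?thesis using near[OF that(1)] near[OF that(2)] \<epsilon>(2) by linarith
  qed
  thus "\<exists>M. \<forall>m\<ge>M. \<forall>n\<ge>M. norm (s m - s n) < e" by blast
qed

lemma convergent_if_small_subfamilies:
  assumes mono: "monotone (\<le>) (\<preceq>) s \<or> monotone (\<ge>) (\<preceq>) s"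
    and small: "\<And>\<epsilon>. \<epsilon> > 0 \<Longrightarrow> \<exists>I. infinite I \<and> (\<forall>j\<in>I. \<forall>l\<in>I. norm (s l - s j) < \<epsilon>)"
  shows "convergent s"
  using mono
proof
  assume "monotone (\<le>) (\<preceq>) s"
  thus ?thesis using small by (rule monotone_convergent_if_small_subfamilies)
next
  assume "monotone (\<ge>) (\<preceq>) s"
  hence "monotone (\<le>) (\<preceq>) (\<lambda>k. - s k)"
    by (auto simp: monotone_def cle_minus_iff)
  moreover have "\<exists>I. infinite I \<and> (\<forall>j\<in>I. \<forall>l\<in>I. norm (- s l - - s j) < \<epsilon>)" if "\<epsilon> > 0" for \<epsilon>
    using small[OF that] by (simp add: norm_minus_commute)
  ultimately have "convergent (\<lambda>k. - s k)" by (rule monotone_convergent_if_small_subfamilies)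
  thus ?thesis using convergent_minus_iff by blast
qed

lemma gamma_condensing_orbit_convergent:
  assumes "gamma_condensing C f" and orbit: "\<And>k. s (Suc k) = f (s k)"
    and "range s \<subseteq> interior C" "bounded (range s)"
    and mono: "monotone (\<le>) (\<preceq>) s \<or> monotone (\<ge>) (\<preceq>) s"
  shows "convergent s"
proof (rule convergent_if_small_subfamilies[OF mono])
  obtain B where B: "\<forall>y\<in>range s. \<forall>z\<in>range s. dist y z \<le> B"
    using assms(4) bounded_two_points by blast
  have zero: "kuratowski dist (range s) \<le> 0"
    using assms(1,3,4) unfolding gamma_condensing_def
    by (intro kuratowski_orbit_le_zero[OF _ orbit B]) auto
  fix \<epsilon> :: real assume "\<epsilon> > 0"
  from small_subfamily_if_kuratowski_zero[OF zero B this]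
  show "\<exists>I. infinite I \<and> (\<forall>j\<in>I. \<forall>l\<in>I. norm (s l - s j) < \<epsilon>)"
    by (metis dist_commute dist_norm)
qed

lemma tau_condensing_orbit_convergent:
  assumes "tau_condensing C f" and orbit: "\<And>k. s (Suc k) = f (s k)"
    and u: "u \<in> interior C" and R: "R \<ge> 0" and cball: "range s \<subseteq> thompson_cball C u R"
    and mono: "monotone (\<le>) (\<preceq>) s \<or> monotone (\<ge>) (\<preceq>) s"
  shows "convergent s"
proof (rule convergent_if_small_subfamilies[OF mono])
  have s_int: "range s \<subseteq> interior C"
    using cball thompson_cball_subset_interior[OF u] by blast
  have B: "\<forall>y\<in>range s. \<forall>z\<in>range s. thompson C y z \<le> 2 * R"
    using cball thompson_le_on_cball[OF R] by blast
  have "thompson_bounded C (range s)"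
    using s_int B unfolding thompson_bounded_def by blast
  hence "kuratowski (thompson C) (f ` range s) < kuratowski (thompson C) (range s)"
    if "kuratowski (thompson C) (range s) > 0"
    using assms(1) that unfolding tau_condensing_def by blast
  moreover have "s 0 \<in> C" using s_int interior_subset by blast
  ultimately have "kuratowski (thompson C) (range s) \<le> 0"
    by (intro kuratowski_orbit_le_zero[OF _ orbit B]) (simp_all add: thompson_self)
  fix \<epsilon> :: real assume \<epsilon>: "\<epsilon> > 0"
  let ?M = "\<kappa> * norm (exp R *\<^sub>R u) + 1"
  have M: "?M > 0" using kappa_nonneg by (simp add: add_nonneg_pos)
  have "((\<lambda>\<delta>. (exp \<delta> - 1) * ?M) \<longlongrightarrow> (exp 0 - 1) * ?M) (at_right 0)"
    by (intro tendsto_intros)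
  then obtain \<delta> where \<delta>: "\<delta> > 0" "(exp \<delta> - 1) * ?M < \<epsilon>"
    using tendsto_zero_at_right_obtain[OF _ \<epsilon>] by auto
  obtain I where I: "infinite I" "\<forall>j\<in>I. \<forall>l\<in>I. thompson C (s j) (s l) < \<delta>"
    using small_subfamily_if_kuratowski_zero[OF \<open>kuratowski _ _ \<le> 0\<close> B \<delta>(1)] by blast
  have "norm (s l - s j) < \<epsilon>" if "j \<in> I" "l \<in> I" for j l
  proof -
    have comparable: "s j \<preceq> s l \<or> s l \<preceq> s j"
      using mono nat_le_linear[of j l] by (meson monotoneD)
    have "s j \<preceq> exp R *\<^sub>R u" using cball by (auto simp: thompson_cball_def)
    hence "norm (s l - s j) \<le> \<kappa> * (exp \<delta> - 1) * norm (exp R *\<^sub>R u)"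
      using norm_diff_le_thompson s_int comparable I(2) that by blast
    also have "\<dots> \<le> (exp \<delta> - 1) * ?M"
      using \<delta>(1) by (simp add: algebra_simps)
    finally show ?thesis using \<delta>(2) by linarith
  qed
  thus "\<exists>I. infinite I \<and> (\<forall>j\<in>I. \<forall>l\<in>I. norm (s l - s j) < \<epsilon>)" using I(1) by blast
qed

end

section \<open>Orbits of order intervals around a fixed point\<close>

locale subhomogeneous_fixed_point =
  normal_cone_order C \<kappa> + order_preserving_subhomogeneous C f
  for C :: "'a::banach set" and \<kappa> f +
  fixes u :: 'a
  assumes fixed_point: "u \<in> fixpoints (interior C) f"
begin

lemma u_interior: "u \<in> interior C" and f_u: "f u = u"
  using fixed_point by (auto simp: fixpoints_def)

lemma lower_endpoint_cle_f:
  assumes "R \<ge> 0" shows "exp (-R) *\<^sub>R u \<preceq> f (exp (-R) *\<^sub>R u)"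
proof -
  have "exp (-R) *\<^sub>R u \<in> interior C" using scaleR_interior[OF u_interior] by simp
  from f_scaleR_cle[OF this, of "exp R"] assms have "u \<preceq> exp R *\<^sub>R f (exp (-R) *\<^sub>R u)"
    by (simp add: f_u exp_minus)
  from cle_scaleR[OF this, of "exp (-R)"] show ?thesis by (simp add: exp_minus)
qed

lemma f_cle_upper_endpoint: "R \<ge> 0 \<Longrightarrow> f (exp R *\<^sub>R u) \<preceq> exp R *\<^sub>R u"
  using f_scaleR_cle[OF u_interior, of "exp R"] by (simp add: f_u)

lemma f_thompson_cball:
  assumes "R \<ge> 0" "z \<in> thompson_cball C u R"
  shows "f z \<in> thompson_cball C u R"
proof -
  let ?a = "exp (-R) *\<^sub>R u" and ?b = "exp R *\<^sub>R u"
  have ab: "?a \<in> interior C" "?b \<in> interior C"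
    using scaleR_interior[OF u_interior] by simp_all
  have z: "z \<in> interior C" "?a \<preceq> z" "z \<preceq> ?b"
    using assms(2) thompson_cball_subset_interior[OF u_interior] by (auto simp: thompson_cball_def)
  have "?a \<preceq> f z"
    using lower_endpoint_cle_f[OF assms(1)] f_mono[OF ab(1) z(1,2)] cle_trans by blast
  moreover have "f z \<preceq> ?b"
    using f_cle_upper_endpoint[OF assms(1)] f_mono[OF z(1) ab(2) z(3)] cle_trans by blast
  ultimately show ?thesis by (simp add: thompson_cball_def)
qed

lemma funpow_thompson_cball:
  "R \<ge> 0 \<Longrightarrow> z \<in> thompson_cball C u R \<Longrightarrow> (f ^^ k) z \<in> thompson_cball C u R"
  by (induction k) (auto intro: f_thompson_cball)

lemma orbit_convergent:
  assumes cond: "regular_cone C \<or> gamma_condensing C f \<or> tau_condensing C f"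
    and R: "R \<ge> 0" and x: "x \<in> thompson_cball C u R" and step: "x \<preceq> f x \<or> f x \<preceq> x"
  shows "convergent (\<lambda>k. (f ^^ k) x)"
proof -
  let ?s = "\<lambda>k. (f ^^ k) x"
  have orbit: "?s (Suc k) = f (?s k)" for k by simp
  have cball: "range ?s \<subseteq> thompson_cball C u R"
    using funpow_thompson_cball[OF R x] by blast
  have int: "range ?s \<subseteq> interior C"
    using cball thompson_cball_subset_interior[OF u_interior] by blast
  have "x \<in> interior C" using x thompson_cball_subset_interior[OF u_interior] by blast
  hence mono: "monotone (\<le>) (\<preceq>) ?s \<or> monotone (\<ge>) (\<preceq>) ?s"
    using step orbit_monotone[of x] orbit_antitone[of x] by blast
  from cond show ?thesis
  proof (elim disjE)
    assume "regular_cone C"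
    moreover have "exp (-R) *\<^sub>R u \<preceq> ?s k" "?s k \<preceq> exp R *\<^sub>R u" for k
      using cball by (auto simp: thompson_cball_def)
    ultimately show ?thesis by (rule regular_cone_convergent[OF _ _ _ mono])
  next
    assume "gamma_condensing C f"
    moreover have "bounded (range ?s)"
      using bounded_subset[OF bounded_thompson_cball cball] .
    ultimately show ?thesis by (rule gamma_condensing_orbit_convergent[OF _ orbit int _ mono])
  next
    assume "tau_condensing C f"
    thus ?thesis by (rule tau_condensing_orbit_convergent[OF _ orbit u_interior R cball mono])
  qed
qed

lemma orbit_eventually_in_thompson_ball:
  assumes cond: "regular_cone C \<or> gamma_condensing C f \<or> tau_condensing C f"
    and R: "R \<ge> 0" and x: "x \<in> thompson_cball C u R" and step: "x \<preceq> f x \<or> f x \<preceq> x"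
    and fix_ball: "fixpoints (interior C) f \<subseteq> thompson_ball C u r"
  shows "eventually (\<lambda>k. (f ^^ k) x \<in> thompson_ball C u r) sequentially"
proof -
  obtain z where lim: "(\<lambda>k. (f ^^ k) x) \<longlonglongrightarrow> z"
    using orbit_convergent[OF cond R x step] by (auto simp: convergent_def)
  have "z \<in> thompson_cball C u R"
    using funpow_thompson_cball[OF R x]
    by (intro Lim_in_closed_set[OF closed_thompson_cball _ sequentially_bot lim]) simp
  hence z: "z \<in> interior C" using thompson_cball_subset_interior[OF u_interior] by blast
  have x_int: "x \<in> interior C" using x thompson_cball_subset_interior[OF u_interior] by blast
  have "z \<in> fixpoints (interior C) f"
    using orbit_limit_fixed[OF x_int lim z] z by (simp add: fixpoints_def)
  hence "z \<in> thompson_ball C u r" using fix_ball by blast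
  from eventually_nhds_in_thompson_ball[OF u_interior this] show ?thesis
    by (rule filterlim_iff[THEN iffD1, OF lim, rule_format])
qed

lemma funpow_thompson_cball_subset_ball:
  assumes cond: "regular_cone C \<or> gamma_condensing C f \<or> tau_condensing C f"
    and R: "R \<ge> 0" and fix_ball: "fixpoints (interior C) f \<subseteq> thompson_ball C u r"
  obtains k where "(f ^^ k) ` thompson_cball C u R \<subseteq> thompson_ball C u r"
proof -
  let ?a = "exp (-R) *\<^sub>R u" and ?b = "exp R *\<^sub>R u"
  have uC: "u \<in> C" using u_interior interior_subset by blast
  have ab: "?a \<in> thompson_cball C u R" "?b \<in> thompson_cball C u R"
    using R cle_refl cle_scaleR_left[OF uC, of "exp (-R)" "exp R"] by (auto simp: thompson_cball_def)
  have "eventually (\<lambda>k. (f ^^ k) ?a \<in> thompson_ball C u r \<and> (f ^^ k) ?b \<in> thompson_ball C u r)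
      sequentially"
    using orbit_eventually_in_thompson_ball[OF cond R ab(1) _ fix_ball]
      orbit_eventually_in_thompson_ball[OF cond R ab(2) _ fix_ball]
      lower_endpoint_cle_f[OF R] f_cle_upper_endpoint[OF R]
    by (auto intro: eventually_conj)
  then obtain k where k: "(f ^^ k) ?a \<in> thompson_ball C u r" "(f ^^ k) ?b \<in> thompson_ball C u r"
    using eventually_happens'[OF sequentially_bot] by blast
  have "(f ^^ k) z \<in> thompson_ball C u r" if z: "z \<in> thompson_cball C u R" for z
  proof (rule thompson_ball_order_convex[OF u_interior k])
    have int: "?a \<in> interior C" "?b \<in> interior C" "z \<in> interior C"
      using ab z thompson_cball_subset_interior[OF u_interior] by blast+
    show "(f ^^ k) ?a \<preceq> (f ^^ k) z" "(f ^^ k) z \<preceq> (f ^^ k) ?b"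
      using z funpow_mono[OF int(1,3)] funpow_mono[OF int(3,2)] by (auto simp: thompson_cball_def)
  qed
  thus ?thesis using that by blast
qed

lemma funpow_tendsto_unique_fixed_point:
  assumes cond: "regular_cone C \<or> gamma_condensing C f \<or> tau_condensing C f"
    and unique: "fixpoints (interior C) f = {u}" and x: "x \<in> interior C"
  shows "(\<lambda>k. (f ^^ k) x) \<longlonglongrightarrow> u"
proof (rule tendsto_if_eventually_in_thompson_ball[OF u_interior])
  fix r :: real assume r: "r > 0"
  obtain R0 where R0: "\<And>R. R \<ge> R0 \<Longrightarrow> x \<in> thompson_cball C u R"
    using mem_thompson_cball_if_large[OF u_interior x] by blast
  define R where "R = max R0 0"
  have R: "R \<ge> 0" "x \<in> thompson_cball C u R" using R0 by (auto simp: R_def)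
  have "fixpoints (interior C) f \<subseteq> thompson_ball C u r"
  proof -
    have "u \<in> C" using u_interior interior_subset by blast
    thus ?thesis using unique u_interior thompson_self[of u] r by (simp add: thompson_ball_def)
  qed
  then obtain K where K: "(f ^^ K) ` thompson_cball C u R \<subseteq> thompson_ball C u r"
    using funpow_thompson_cball_subset_ball[OF cond R(1)] by blast
  have "(f ^^ n) x \<in> thompson_ball C u r" if "n \<ge> K" for n
  proof -
    have "(f ^^ n) x = (f ^^ K) ((f ^^ (n - K)) x)"
      using that by (metis funpow_add le_add_diff_inverse comp_apply)
    thus ?thesis using K funpow_thompson_cball[OF R] by blast
  qed
  thus "eventually (\<lambda>k. (f ^^ k) x \<in> thompson_ball C u r) sequentially"
    unfolding eventually_sequentially by blast
qed

end

theorem lemma4p3: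
  fixes C :: "'a::banach set" and f :: "'a \<Rightarrow> 'a" and u :: 'a
  assumes cone: "closed_cone C"
    and normal: "normal_cone C"
    and int_ne: "interior C \<noteq> {}"
    and maps: "f ` interior C \<subseteq> interior C"
    and op: "order_preserving_on C f"
    and sh: "subhomogeneous_on C f"
    and cond: "regular_cone C \<or> gamma_condensing C f \<or> tau_condensing C f"
    and u: "u \<in> fixpoints (interior C) f"
    and bdd: "thompson_bounded C (fixpoints (interior C) f)"
  shows "(\<forall>R r. 0 < r \<and> r < R \<and> fixpoints (interior C) f \<subseteq> thompson_ball C u r \<longrightarrow>
            (\<exists>k::nat. (f ^^ k) ` thompson_cball C u R \<subseteq> thompson_ball C u r))
       \<and> (fixpoints (interior C) f = {u} \<longrightarrow>
            (\<forall>x\<in>interior C. (\<lambda>k. (f ^^ k) x) \<longlonglongrightarrow> u))"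
proof -
  obtain \<kappa> where \<kappa>: "\<And>x y. cone_le C 0 x \<Longrightarrow> cone_le C x y \<Longrightarrow> norm x \<le> \<kappa> * norm y"
    using normal unfolding normal_cone_def by blast
  interpret subhomogeneous_fixed_point C "max \<kappa> 0" f u
  proof unfold_locales
    fix x y assume "cone_le C 0 x" "cone_le C x y"
    thus "norm x \<le> max \<kappa> 0 * norm y"
      using \<kappa> by (smt (verit) mult_right_mono norm_ge_zero)
  qed (use cone maps op sh u in auto)
  show ?thesis
    using funpow_thompson_cball_subset_ball[OF cond] funpow_tendsto_unique_fixed_point[OF cond]
    by (metis less_eq_real_def less_trans)
qed

end
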